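(* Let $f,g:\mathbb{R}^n\to\mathbb{R}$ be twice continuously differentiable, with $\lim_{|x|\to\infty}f(x)=+\infty$, and suppose $\nabla g(x)\neq 0$ for all $x\in\mathbb{R}^n$. Let $\zeta\in[0,1)$ and $x_0\in\{x:g(x)\le 0\}$. Then the trajectory $x(t;\zeta,x_0)$ converges to a connected subset of critical points of $f$. In particular, if the critical points of $f$ are isolated, then $\lim_{t\to T_{\zeta,x_0}^-}x(t;\zeta,x_0)=x_c$ for some critical point $x_c$ of $f$.
   Context: For $\zeta\in[0,1)$, $\mathbf{s}_\zeta(x)=-\frac{\nabla f(x)}{|\nabla f(x)|}-\zeta\frac{\nabla g(x)}{|\nabla g(x)|}$ ($|\cdot|$ Euclidean norm), defined on $E=\{x:\nabla f(x)\neq0,\ \nabla g(x)\neq 0\}$. The trajectory $x(t;\zeta,x_0)$ is the solution of $\frac{dx}{dt}=\mathbf{s}_\zeta(x)$, $x(0)=x_0$, and $[0,T_{\zeta,x_0})$ is its maximal interval of existence in $E$. *)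

theory Defs
  imports "HOL-Analysis.Analysis"
begin

definition grad :: "('a::euclidean_space \<Rightarrow> real) \<Rightarrow> 'a \<Rightarrow> 'a" where
  "grad f x = (THE v. (f has_derivative (\<lambda>h. v \<bullet> h)) (at x))"

definition twice_cont_diff :: "('a::euclidean_space \<Rightarrow> real) \<Rightarrow> bool" where
  "twice_cont_diff f \<longleftrightarrow> (\<forall>x. f differentiable at x) \<and>
     (\<exists>H :: 'a \<Rightarrow> 'a \<Rightarrow>\<^sub>L 'a. continuous_on UNIV H \<and>
        (\<forall>x. (grad f has_derivative blinfun_apply (H x)) (at x)))"

definition dom_E :: "('a::euclidean_space \<Rightarrow> real) \<Rightarrow> ('a \<Rightarrow> real) \<Rightarrow> 'a set" where
  "dom_E f g = {x. grad f x \<noteq> 0 \<and> grad g x \<noteq> 0}"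

definition sfield :: "('a::euclidean_space \<Rightarrow> real) \<Rightarrow> ('a \<Rightarrow> real) \<Rightarrow> real \<Rightarrow> 'a \<Rightarrow> 'a" where
  "sfield f g \<zeta> x = - (1 / norm (grad f x)) *\<^sub>R grad f x - (\<zeta> / norm (grad g x)) *\<^sub>R grad g x"

definition is_sol :: "('a::euclidean_space \<Rightarrow> real) \<Rightarrow> ('a \<Rightarrow> real) \<Rightarrow> real \<Rightarrow> 'a
    \<Rightarrow> (real \<Rightarrow> 'a) \<Rightarrow> ereal \<Rightarrow> bool" where
  "is_sol f g \<zeta> x0 x T \<longleftrightarrow> 0 < T \<and> x 0 = x0 \<and>
     (\<forall>t. 0 \<le> t \<and> ereal t < T \<longrightarrow>
        x t \<in> dom_E f g \<and>
        (x has_vector_derivative sfield f g \<zeta> (x t)) (at t within {s. 0 \<le> s \<and> ereal s < T}))"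

definition is_max_sol :: "('a::euclidean_space \<Rightarrow> real) \<Rightarrow> ('a \<Rightarrow> real) \<Rightarrow> real \<Rightarrow> 'a
    \<Rightarrow> (real \<Rightarrow> 'a) \<Rightarrow> ereal \<Rightarrow> bool" where
  "is_max_sol f g \<zeta> x0 x T \<longleftrightarrow> is_sol f g \<zeta> x0 x T \<and>
     (\<forall>y T'. is_sol f g \<zeta> x0 y T' \<and> (\<forall>t. 0 \<le> t \<and> ereal t < min T T' \<longrightarrow> y t = x t)
        \<longrightarrow> T' \<le> T)"

definition to_T :: "ereal \<Rightarrow> real filter" where
  "to_T T = (if T = \<infinity> then at_top else at_left (real_of_ereal T))"

end

theory Submission
  imports Defs
begin

(* Along the flow, d/dt f(x t) = grad f . s_zeta <= -(1 - zeta) |grad f| <= 0, so the trajectory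
   stays in the compact sublevel set {f <= f x0}, and its speed is at most 1 + zeta.

   If T is infinite, grad f (x t) tends to 0: otherwise, by uniform continuity of grad f on the
   sublevel set, f would drop by a fixed amount infinitely often, although it is bounded below.
   Hence the omega-limit set of the trajectory, which is nonempty, connected (a decreasing
   intersection of compact connected sets) and attracts the trajectory, consists of critical
   points.

   If T is finite, the Lipschitz trajectory has a limit at T. Were this limit not critical, it
   would lie in E, near which s_zeta is Lipschitz, and the Picard-Lindeloef theorem would
   continue the solution beyond T, contradicting maximality.

   When the critical points are isolated, the connected limit set is a single point. *)

lemma has_derivative_grad:
  fixes f :: "'a::euclidean_space \<Rightarrow> real"
  assumes "f differentiable at x"
  shows "(f has_derivative (\<lambda>h. grad f x \<bullet> h)) (at x)"
proof -
  obtain f' where f': "(f has_derivative f') (at x)"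
    using assms by (auto simp: differentiable_def)
  define v where "v = (\<Sum>i\<in>Basis. f' i *\<^sub>R i)"
  have "f' h = v \<bullet> h" for h
  proof -
    have "f' h = f' (\<Sum>i\<in>Basis. (h \<bullet> i) *\<^sub>R i)"
      by (simp add: euclidean_representation)
    also have "\<dots> = (\<Sum>i\<in>Basis. (h \<bullet> i) * f' i)"
      using has_derivative_linear[OF f'] by (simp add: linear_sum linear_cmul)
    also have "\<dots> = v \<bullet> h"
      by (simp add: v_def inner_sum_right inner_commute mult.commute)
    finally show ?thesis .
  qed
  then have v: "(f has_derivative (\<lambda>h. v \<bullet> h)) (at x)"
    using f' by (metis ext)
  have "grad f x = v"
    unfolding grad_def
  proof (rule the_equality)
    fix w assume "(f has_derivative (\<lambda>h. w \<bullet> h)) (at x)"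
    then have "(\<lambda>h. w \<bullet> h) = (\<lambda>h. v \<bullet> h)"
      using v has_derivative_unique by blast
    then show "w = v"
      by (metis vector_eq_rdot)
  qed (fact v)
  then show ?thesis
    using v by simp
qed

lemma twice_cont_diff_has_derivative_grad:
  "twice_cont_diff f \<Longrightarrow> (f has_derivative (\<lambda>h. grad f x \<bullet> h)) (at x)"
  by (simp add: twice_cont_diff_def has_derivative_grad)

lemma twice_cont_diff_continuous_on: "twice_cont_diff f \<Longrightarrow> continuous_on S f"
  by (meson continuous_at_imp_continuous_on differentiable_imp_continuous_within
      twice_cont_diff_def)

lemma twice_cont_diff_continuous_on_grad: "twice_cont_diff f \<Longrightarrow> continuous_on S (grad f)"
  unfolding twice_cont_diff_def
  by (metis continuous_at_imp_continuous_on has_derivative_continuous)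

lemma twice_cont_diff_lipschitz_on_grad:
  fixes f :: "'a::euclidean_space \<Rightarrow> real"
  assumes "twice_cont_diff f" "convex S" "compact S"
  obtains B where "B-lipschitz_on S (grad f)"
proof -
  obtain H :: "'a \<Rightarrow> 'a \<Rightarrow>\<^sub>L 'a" where H: "continuous_on UNIV H"
    and grad_deriv: "\<And>x. (grad f has_derivative blinfun_apply (H x)) (at x)"
    using assms(1) by (auto simp: twice_cont_diff_def)
  have "compact (H ` S)"
    using assms(3) by (intro compact_continuous_image continuous_on_subset[OF H]) auto
  then obtain B where B: "B > 0" "\<And>y. y \<in> S \<Longrightarrow> norm (H y) \<le> B"
    using compact_imp_bounded bounded_pos by (metis image_eqI)
  have "B-lipschitz_on S (grad f)"
  proof (rule bounded_derivative_imp_lipschitz[OF _ assms(2)])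
    show "(grad f has_derivative blinfun_apply (H x)) (at x within S)" for x
      using grad_deriv has_derivative_at_withinI by blast
  qed (use B in \<open>auto simp: norm_blinfun.rep_eq\<close>)
  then show thesis ..
qed

lemma norm_normalized_diff_le:
  fixes v w :: "'a::real_normed_vector"
  assumes "0 < m" "m \<le> norm v" "m \<le> norm w"
  shows "norm ((1 / norm v) *\<^sub>R v - (1 / norm w) *\<^sub>R w) \<le> 2 / m * norm (v - w)"
proof -
  have v: "norm v > 0" and w: "norm w > 0"
    using assms by auto
  have "(1 / norm v) *\<^sub>R v - (1 / norm w) *\<^sub>R w
      = (1 / norm v) *\<^sub>R (v - w) + (1 / norm v - 1 / norm w) *\<^sub>R w"
    by (simp add: algebra_simps)
  then have "norm ((1 / norm v) *\<^sub>R v - (1 / norm w) *\<^sub>R w)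
      \<le> norm ((1 / norm v) *\<^sub>R (v - w)) + norm ((1 / norm v - 1 / norm w) *\<^sub>R w)"
    by (metis norm_triangle_ineq)
  also have "norm ((1 / norm v - 1 / norm w) *\<^sub>R w) = \<bar>norm w - norm v\<bar> / norm v"
    using v w by (simp add: field_simps)
  also have "\<dots> \<le> norm (v - w) / norm v"
    using v by (intro divide_right_mono) (auto simp: abs_minus_commute norm_triangle_ineq3)
  also have "norm ((1 / norm v) *\<^sub>R (v - w)) + norm (v - w) / norm v = 2 * norm (v - w) / norm v"
    by simp
  also have "\<dots> \<le> 2 * norm (v - w) / m"
    using assms v by (intro divide_left_mono) auto
  finally show ?thesis
    by simp
qed

lemma lipschitz_on_normalized:
  fixes h :: "'a::metric_space \<Rightarrow> 'b::real_normed_vector"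
  assumes "B-lipschitz_on S h" "0 < m" "\<And>y. y \<in> S \<Longrightarrow> m \<le> norm (h y)"
  shows "(2 / m * B)-lipschitz_on S (\<lambda>y. (1 / norm (h y)) *\<^sub>R h y)"
proof (rule lipschitz_onI)
  fix y z assume "y \<in> S" "z \<in> S"
  then have "dist ((1 / norm (h y)) *\<^sub>R h y) ((1 / norm (h z)) *\<^sub>R h z) \<le> 2 / m * dist (h y) (h z)"
    using norm_normalized_diff_le[OF assms(2,3) assms(3)] by (simp add: dist_norm)
  also have "\<dots> \<le> 2 / m * (B * dist y z)"
    using lipschitz_onD[OF assms(1) \<open>y \<in> S\<close> \<open>z \<in> S\<close>] assms(2) by (intro mult_left_mono) auto
  finally show "dist ((1 / norm (h y)) *\<^sub>R h y) ((1 / norm (h z)) *\<^sub>R h z) \<le> 2 / m * B * dist y z"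
    by simp
next
  show "0 \<le> 2 / m * B"
    using lipschitz_on_nonneg[OF assms(1)] assms(2) by simp
qed

lemma connected_subset_isolated_sing:
  fixes C :: "'a::metric_space set"
  assumes "connected C" "C \<noteq> {}" "C \<subseteq> P"
    and isolated: "\<And>p. p \<in> P \<Longrightarrow> \<exists>e>0. \<forall>q\<in>P. dist q p < e \<longrightarrow> q = p"
  obtains p where "C = {p}"
proof -
  obtain p where p: "p \<in> C"
    using assms(2) by blast
  then obtain e where "e > 0" "\<And>q. q \<in> P \<Longrightarrow> dist q p < e \<Longrightarrow> q = p"
    using isolated assms(3) by blast
  then have "C \<inter> ball p e = {p}"
    using p assms(3) by (auto simp: dist_commute)
  then have "openin (top_of_set C) {p}"
    by (metis open_ball openin_open_Int)
  moreover have "closedin (top_of_set C) {p}"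
    using p closedin_closed_Int[of "{p}" C] by (simp add: Int_absorb1)
  ultimately have "C = {p}"
    using assms(1) p unfolding connected_clopen by blast
  then show thesis ..
qed

lemma compact_sublevel_set:
  fixes f :: "'a::{heine_borel,real_normed_vector} \<Rightarrow> real"
  assumes "continuous_on UNIV f" "filterlim f at_top at_infinity"
  shows "compact {y. f y \<le> c}"
proof -
  obtain b where b: "\<And>y. b \<le> norm y \<Longrightarrow> c + 1 \<le> f y"
    using assms(2) unfolding filterlim_at_top eventually_at_infinity by blast
  have "norm y \<le> b" if "f y \<le> c" for y
    using b[of y] that by linarith
  then have "{y. f y \<le> c} \<subseteq> cball 0 b"
    by auto
  moreover have "closed {y. f y \<le> c}"
    using assms(1) by (intro closed_Collect_le continuous_intros) auto
  ultimately show ?thesis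
    by (meson bounded_cball bounded_subset compact_eq_bounded_closed)
qed

lemma has_vector_derivative_within_Un:
  assumes "(f has_vector_derivative f') (at x within S)"
    and "(f has_vector_derivative f') (at x within T)"
  shows "(f has_vector_derivative f') (at x within S \<union> T)"
  using assms unfolding has_vector_derivative_def has_derivative_at_within
  by (simp add: at_within_union filterlim_sup)

locale picard_operator =
  fixes F :: "'a::euclidean_space \<Rightarrow> 'a" and p :: 'a and r L M t0 \<delta> :: real
  assumes radius: "0 \<le> r" and length: "0 < \<delta>"
    and lipschitz: "L-lipschitz_on (cball p r) F" and contracting: "L * \<delta> \<le> 1 / 2"
    and bound: "\<And>y. y \<in> cball p r \<Longrightarrow> norm (F y) \<le> M" and stays_in_ball: "M * \<delta> \<le> r"
begin

definition clamp :: "real \<Rightarrow> real" where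
  "clamp t = max t0 (min (t0 + \<delta>) t)"

lemma clamp: "clamp t \<in> {t0..t0+\<delta>}" "t \<in> {t0..t0+\<delta>} \<Longrightarrow> clamp t = t"
  using length by (auto simp: clamp_def)

definition S :: "(real \<Rightarrow>\<^sub>C 'a) set" where
  "S = PiC UNIV (\<lambda>_. cball p r)"

lemma mem_S: "\<phi> \<in> S \<longleftrightarrow> (\<forall>t. \<phi> t \<in> cball p r)"
  by (simp add: S_def mem_PiC_iff Pi_iff)

lemma continuous_on_F_comp: "\<phi> \<in> S \<Longrightarrow> continuous_on A (\<lambda>u. F (\<phi> u))"
  using mem_S lipschitz_on_continuous_on[OF lipschitz]
  by (intro continuous_on_compose2[OF _ continuous_on_apply_bcontfun]) auto

text \<open>The Picard operator, frozen outside \<open>[t0, t0 + \<delta>]\<close> so that it acts on bounded continuous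
  functions on the whole line.\<close>

definition P :: "(real \<Rightarrow>\<^sub>C 'a) \<Rightarrow> real \<Rightarrow> 'a" where
  "P \<phi> t = p + integral {t0..clamp t} (\<lambda>u. F (\<phi> u))"

lemma P_in_cball:
  assumes "\<phi> \<in> S"
  shows "P \<phi> t \<in> cball p r"
proof -
  have "M \<ge> 0"
    using bound[of p] radius norm_ge_zero[of "F p"] by (auto simp del: norm_ge_zero)
  have "norm (integral {t0..clamp t} (\<lambda>u. F (\<phi> u))) \<le> M * (clamp t - t0)"
    using clamp(1)[of t] assms mem_S bound by (intro integral_bound continuous_on_F_comp) auto
  also have "\<dots> \<le> M * \<delta>"
    using clamp(1)[of t] \<open>M \<ge> 0\<close> by (intro mult_left_mono) auto
  finally show ?thesis
    using stays_in_ball by (simp add: P_def dist_norm)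
qed

lemma P_bcontfun:
  assumes "\<phi> \<in> S"
  shows "P \<phi> \<in> bcontfun"
proof (rule bcontfun_normI)
  have "continuous_on {t0..t0+\<delta>} (\<lambda>s. integral {t0..s} (\<lambda>u. F (\<phi> u)))"
    by (intro indefinite_integral_continuous_1 integrable_continuous_real continuous_on_F_comp assms)
  moreover have "continuous_on UNIV clamp"
    unfolding clamp_def[abs_def] by (intro continuous_intros)
  ultimately have "continuous_on UNIV (\<lambda>t. integral {t0..clamp t} (\<lambda>u. F (\<phi> u)))"
    by (rule continuous_on_compose2) (use clamp(1) in auto)
  then show "continuous_on UNIV (P \<phi>)"
    unfolding P_def[abs_def] by (rule continuous_on_add[OF continuous_on_const])
  show "norm (P \<phi> t) \<le> norm p + r" for t
    using P_in_cball[OF assms, of t] norm_triangle_sub[of "P \<phi> t" p]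
    by (auto simp: dist_norm norm_minus_commute)
qed

lemma dist_P_le:
  assumes "\<phi> \<in> S" "\<psi> \<in> S"
  shows "dist (P \<phi> t) (P \<psi> t) \<le> 1 / 2 * dist \<phi> \<psi>"
proof -
  have "L \<ge> 0"
    using lipschitz by (rule lipschitz_on_nonneg)
  have "dist (P \<phi> t) (P \<psi> t) = norm (integral {t0..clamp t} (\<lambda>u. F (\<phi> u) - F (\<psi> u)))"
    unfolding P_def dist_norm
    by (subst integral_diff) (auto intro!: integrable_continuous_real continuous_on_F_comp assms)
  also have "\<dots> \<le> L * dist \<phi> \<psi> * (clamp t - t0)"
  proof (rule integral_bound)
    fix u
    have "norm (F (\<phi> u) - F (\<psi> u)) \<le> L * norm (\<phi> u - \<psi> u)"
      by (rule lipschitz_on_normD[OF lipschitz]) (use assms mem_S in auto)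
    also have "\<dots> \<le> L * dist \<phi> \<psi>"
      using dist_bounded[of \<phi> u \<psi>] \<open>L \<ge> 0\<close> by (simp add: dist_norm mult_left_mono)
    finally show "norm (F (\<phi> u) - F (\<psi> u)) \<le> L * dist \<phi> \<psi>" .
  qed (use clamp(1) assms in \<open>auto intro: continuous_on_diff continuous_on_F_comp\<close>)
  also have "\<dots> \<le> L * dist \<phi> \<psi> * \<delta>"
    using clamp(1)[of t] \<open>L \<ge> 0\<close> by (intro mult_left_mono) auto
  also have "\<dots> = L * \<delta> * dist \<phi> \<psi>"
    by simp
  also have "\<dots> \<le> 1 / 2 * dist \<phi> \<psi>"
    using contracting by (intro mult_right_mono) auto
  finally show ?thesis .
qed

lemma fixed_point:
  obtains z where "continuous_on UNIV z" "\<And>t. z t \<in> cball p r"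
    and "\<And>t. t \<in> {t0..t0+\<delta>} \<Longrightarrow> z t = p + integral {t0..t} (\<lambda>u. F (z u))"
proof -
  have P: "apply_bcontfun (Bcontfun (P \<phi>)) = P \<phi>" if "\<phi> \<in> S" for \<phi>
    using P_bcontfun[OF that] by (simp add: Bcontfun_inverse)
  have "\<exists>!\<phi>\<in>S. Bcontfun (P \<phi>) = \<phi>"
  proof (rule Banach_fix[where c = "1 / 2"])
    show "complete S"
      unfolding S_def complete_eq_closed by (rule closed_PiC) auto
    show "S \<noteq> {}"
      using mem_S[of "const_bcontfun p"] radius by auto
    show "(\<lambda>\<phi>. Bcontfun (P \<phi>)) ` S \<subseteq> S"
      using P P_in_cball mem_S by auto
    show "dist (Bcontfun (P \<phi>)) (Bcontfun (P \<psi>)) \<le> 1 / 2 * dist \<phi> \<psi>"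
      if "\<phi> \<in> S" "\<psi> \<in> S" for \<phi> \<psi>
      using dist_P_le[OF that] P[OF that(1)] P[OF that(2)] by (intro dist_bound) simp
  qed simp_all
  then obtain \<phi> where "\<phi> \<in> S" "Bcontfun (P \<phi>) = \<phi>"
    by blast
  then have fixed: "apply_bcontfun \<phi> = P \<phi>"
    using P[OF \<open>\<phi> \<in> S\<close>] by simp
  show thesis
  proof
    show "continuous_on UNIV (apply_bcontfun \<phi>)"
      by (rule continuous_on_apply_bcontfun)
    show "apply_bcontfun \<phi> t \<in> cball p r" for t
      using \<open>\<phi> \<in> S\<close> mem_S by blast
    show "apply_bcontfun \<phi> t = p + integral {t0..t} (\<lambda>u. F (apply_bcontfun \<phi> u))"
      if "t \<in> {t0..t0+\<delta>}" for t
      using fun_cong[OF fixed, of t] unfolding P_def clamp(2)[OF that] .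
  qed
qed

lemma local_solution:
  obtains z where "z t0 = p"
    "\<And>t. t \<in> {t0..t0+\<delta>} \<Longrightarrow> z t \<in> cball p r \<and>
       (z has_vector_derivative F (z t)) (at t within {t0..t0+\<delta>})"
proof -
  obtain z where z: "continuous_on UNIV z" "\<And>t. z t \<in> cball p r"
    and z_eq: "\<And>t. t \<in> {t0..t0+\<delta>} \<Longrightarrow> z t = p + integral {t0..t} (\<lambda>u. F (z u))"
    using fixed_point by blast
  have contFz: "continuous_on {t0..t0+\<delta>} (\<lambda>u. F (z u))"
    using z by (intro continuous_on_compose2[OF lipschitz_on_continuous_on[OF lipschitz]])
      (auto intro: continuous_on_subset)
  show thesis
  proof
    show "z t0 = p"
      using z_eq[of t0] length by simp
    fix t assume t: "t \<in> {t0..t0+\<delta>}"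
    have "((\<lambda>t. p + integral {t0..t} (\<lambda>u. F (z u))) has_vector_derivative F (z t))
        (at t within {t0..t0+\<delta>})"
      using has_vector_derivative_add[OF has_vector_derivative_const
          integral_has_vector_derivative[OF contFz t]] by simp
    then have "(z has_vector_derivative F (z t)) (at t within {t0..t0+\<delta>})"
      by (rule has_vector_derivative_transform_within[OF _ zero_less_one t]) (simp add: z_eq)
    then show "z t \<in> cball p r \<and> (z has_vector_derivative F (z t)) (at t within {t0..t0+\<delta>})"
      using z(2) by simp
  qed
qed

end

lemma lipschitz_local_solution:
  fixes F :: "'a::euclidean_space \<Rightarrow> 'a"
  assumes "0 < r" "L-lipschitz_on (cball p r) F" "\<And>y. y \<in> cball p r \<Longrightarrow> norm (F y) \<le> M"
  obtains \<delta> z where "0 < \<delta>" "z t0 = p"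
    "\<And>t. t \<in> {t0..t0+\<delta>} \<Longrightarrow> z t \<in> cball p r \<and>
       (z has_vector_derivative F (z t)) (at t within {t0..t0+\<delta>})"
proof -
  have "M \<ge> 0"
    using order_trans[OF norm_ge_zero assms(3)[of p]] assms(1) by simp
  have "L \<ge> 0"
    using assms(2) by (rule lipschitz_on_nonneg)
  define \<delta> where "\<delta> = min (r / (M + 1)) (1 / (2 * L + 1))"
  have "0 < \<delta>"
    using assms(1) \<open>M \<ge> 0\<close> \<open>L \<ge> 0\<close> by (simp add: \<delta>_def)
  moreover have "M * \<delta> \<le> r"
  proof -
    have "M * \<delta> \<le> (M + 1) * (r / (M + 1))"
      using \<open>0 < \<delta>\<close> \<open>M \<ge> 0\<close> by (intro mult_mono) (auto simp: \<delta>_def)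
    then show ?thesis
      using \<open>M \<ge> 0\<close> by simp
  qed
  moreover have "L * \<delta> \<le> 1 / 2"
  proof -
    have "L * \<delta> \<le> L * (1 / (2 * L + 1))"
      using \<open>L \<ge> 0\<close> by (intro mult_left_mono) (auto simp: \<delta>_def)
    also have "\<dots> \<le> 1 / 2"
      using \<open>L \<ge> 0\<close> by (simp add: field_simps)
    finally show ?thesis .
  qed
  ultimately interpret picard_operator F p r L M t0 \<delta>
    using assms by unfold_locales auto
  obtain z where "z t0 = p" "\<And>t. t \<in> {t0..t0+\<delta>} \<Longrightarrow> z t \<in> cball p r \<and>
      (z has_vector_derivative F (z t)) (at t within {t0..t0+\<delta>})"
    using local_solution by blast
  with \<open>0 < \<delta>\<close> show thesis
    using that by blast
qed

lemma has_vector_derivative_Icc_of_Ico: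
  fixes y :: "real \<Rightarrow> 'a::banach"
  assumes "a < b" "continuous_on {a..b} y" "continuous_on {a..b} y'"
    and deriv: "\<And>t. t \<in> {a..<b} \<Longrightarrow> (y has_vector_derivative y' t) (at t within {a..<b})"
    and "t \<in> {a..b}"
  shows "(y has_vector_derivative y' t) (at t within {a..b})"
proof -
  define I where "I s = y a + integral {a..s} y'" for s
  have I_y: "I s = y s" if "s \<in> {a..<b}" for s
  proof -
    have "(y' has_integral (y s - y a)) {a..s}"
    proof (rule fundamental_theorem_of_calculus)
      show "(y has_vector_derivative y' u) (at u within {a..s})" if "u \<in> {a..s}" for u
        using deriv[of u] \<open>s \<in> {a..<b}\<close> that
        by (auto intro: has_vector_derivative_within_subset)
    qed (use that in auto)
    then show ?thesis
      by (simp add: I_def integral_unique)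
  qed
  have "continuous_on {a..b} I"
    unfolding I_def
    by (rule continuous_on_add[OF continuous_on_const indefinite_integral_continuous_1])
      (rule integrable_continuous_real[OF assms(3)])
  then have "(I \<longlongrightarrow> I b) (at_left b)"
    using assms(1) by (rule continuous_on_Icc_at_leftD)
  moreover have "(y \<longlongrightarrow> y b) (at_left b)"
    using assms(2,1) by (rule continuous_on_Icc_at_leftD)
  moreover have "eventually (\<lambda>s. I s = y s) (at_left b)"
    unfolding eventually_at_left_field using assms(1) I_y by (intro exI[of _ a]) auto
  ultimately have "I b = y b"
    by (metis tendsto_cong tendsto_unique trivial_limit_at_left_real)
  then have I_y': "I s = y s" if "s \<in> {a..b}" for s
    using I_y[of s] that by (cases "s = b") auto
  have "(I has_vector_derivative y' t) (at t within {a..b})"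
    using has_vector_derivative_add[OF has_vector_derivative_const
        integral_has_vector_derivative[OF assms(3,5)]]
    by (simp add: I_def[abs_def])
  then show ?thesis
    by (rule has_vector_derivative_transform_within[OF _ zero_less_one assms(5)]) (simp add: I_y')
qed

lemma has_vector_derivative_Icc_join:
  assumes "b \<in> {a..c}" "t \<in> {a..c}"
    and left: "\<And>t. t \<in> {a..b} \<Longrightarrow> (y has_vector_derivative y' t) (at t within {a..b})"
    and right: "\<And>t. t \<in> {b..c} \<Longrightarrow> (y has_vector_derivative y' t) (at t within {b..c})"
  shows "(y has_vector_derivative y' t) (at t within {a..c})"
proof -
  consider "t < b" | "t = b" | "t > b"
    by linarith
  then show ?thesis
  proof cases
    case 1
    have "at t within {a..c} = at t within {a..b}"
      by (rule at_within_nhd[of _ "{..<b}"]) (use 1 assms(1) in auto)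
    then show ?thesis
      using left[of t] 1 assms(2) by simp
  next
    case 2
    have "{a..c} = {a..b} \<union> {b..c}"
      using assms(1) by auto
    moreover have "(y has_vector_derivative y' b) (at b within {a..b} \<union> {b..c})"
      using assms(1) by (intro has_vector_derivative_within_Un left right) auto
    ultimately show ?thesis
      using 2 by simp
  next
    case 3
    have "at t within {a..c} = at t within {b..c}"
      by (rule at_within_nhd[of _ "{b<..}"]) (use 3 assms(1) in auto)
    then show ?thesis
      using right[of t] 3 assms(2) by simp
  qed
qed

lemma continuous_on_Icc_of_Ico:
  fixes y :: "real \<Rightarrow> 'a::topological_space"
  assumes "a < b" "continuous_on {a..<b} y" "(y \<longlongrightarrow> y b) (at_left b)"
  shows "continuous_on {a..b} y"
  unfolding continuous_on_eq_continuous_within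
proof
  fix t assume t: "t \<in> {a..b}"
  show "continuous (at t within {a..b}) y"
  proof (cases "t < b")
    case True
    have "at t within {a..b} = at t within {a..<b}"
      by (rule at_within_nhd[of _ "{..<b}"]) (use True in auto)
    then show ?thesis
      using assms(2) True t by (simp add: continuous_on_eq_continuous_within)
  next
    case False
    then show ?thesis
      using assms(1,3) t by (simp add: continuous_within at_within_Icc_at_left)
  qed
qed

definition omega_limit :: "(real \<Rightarrow> 'a::topological_space) \<Rightarrow> 'a set" where
  "omega_limit x = (\<Inter>t\<in>{0..}. closure (x ` {t..}))"

lemma omega_limit_subseq:
  fixes x :: "real \<Rightarrow> 'a::metric_space"
  assumes "compact K" "x ` {0..} \<subseteq> K" "\<And>n. real n \<le> s n"
  obtains q r where "q \<in> omega_limit x" "strict_mono r" "(\<lambda>k. x (s (r k))) \<longlonglongrightarrow> q"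
proof -
  have "x (s n) \<in> K" for n
    using assms(2) assms(3)[of n] by (metis atLeast_iff image_subset_iff of_nat_0_le_iff order_trans)
  then obtain q r where "strict_mono r" and "((\<lambda>n. x (s n)) \<circ> r) \<longlonglongrightarrow> q"
    using seq_compactE[OF compact_imp_seq_compact[OF assms(1)], of "\<lambda>n. x (s n)"] by blast
  then have lim: "(\<lambda>k. x (s (r k))) \<longlonglongrightarrow> q"
    by (simp add: o_def)
  have "q \<in> closure (x ` {t..})" for t
  proof (rule Lim_in_closed_set[OF closed_closure _ _ lim])
    show "\<forall>\<^sub>F k in sequentially. x (s (r k)) \<in> closure (x ` {t..})"
    proof (rule eventually_sequentiallyI)
      fix k assume "nat \<lceil>t\<rceil> \<le> k"
      then have "t \<le> s (r k)"
        using seq_suble[OF \<open>strict_mono r\<close>, of k] assms(3)[of "r k"] by linarith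
      then show "x (s (r k)) \<in> closure (x ` {t..})"
        by (simp add: closure_subset[THEN subsetD])
    qed
  qed simp
  then have "q \<in> omega_limit x"
    by (simp add: omega_limit_def)
  then show thesis
    using that \<open>strict_mono r\<close> lim by blast
qed

lemma omega_limit_nonempty:
  fixes x :: "real \<Rightarrow> 'a::metric_space"
  assumes "compact K" "x ` {0..} \<subseteq> K"
  shows "omega_limit x \<noteq> {}"
  using omega_limit_subseq[OF assms, of real] by blast

lemma connected_omega_limit:
  fixes x :: "real \<Rightarrow> 'a::euclidean_space"
  assumes "continuous_on {0..} x" "compact K" "x ` {0..} \<subseteq> K"
  shows "connected (omega_limit x)"
  unfolding omega_limit_def
proof (rule connected_chain_gen)
  show "closure (x ` {0..}) \<in> (\<lambda>t. closure (x ` {t..})) ` {0..}"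
    by auto
  show "compact (closure (x ` {0..}))"
    using assms(2,3) by (meson bounded_subset compact_closure compact_imp_bounded)
  fix S assume "S \<in> (\<lambda>t. closure (x ` {t..})) ` {0..}"
  then obtain t where "t \<ge> 0" "S = closure (x ` {t..})"
    by auto
  moreover have "connected (x ` {t..})"
    using assms(1) \<open>t \<ge> 0\<close>
    by (intro connected_continuous_image convex_connected) (auto intro: continuous_on_subset)
  ultimately show "closed S \<and> connected S"
    by (simp add: connected_imp_connected_closure)
next
  fix S S' assume "S \<in> (\<lambda>t. closure (x ` {t..})) ` {0..} \<and> S' \<in> (\<lambda>t. closure (x ` {t..})) ` {0..}"
  then obtain t u where "S = closure (x ` {t..})" "S' = closure (x ` {u..})"
    by auto
  then show "S \<subseteq> S' \<or> S' \<subseteq> S"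
    by (cases "t \<le> u") (auto intro!: closure_mono image_mono)
qed

lemma omega_limit_attracts:
  fixes x :: "real \<Rightarrow> 'a::metric_space"
  assumes "compact K" "x ` {0..} \<subseteq> K"
  shows "((\<lambda>t. infdist (x t) (omega_limit x)) \<longlongrightarrow> 0) at_top"
proof (rule ccontr)
  assume "\<not> ?thesis"
  then obtain e where "e > 0" and freq: "\<exists>t\<ge>real n. e \<le> infdist (x t) (omega_limit x)" for n
    unfolding tendsto_iff eventually_at_top_linorder
    by (force simp: dist_real_def infdist_nonneg not_less)
  then obtain s where s: "\<And>n. real n \<le> s n" "\<And>n. e \<le> infdist (x (s n)) (omega_limit x)"
    by metis
  obtain q r where "q \<in> omega_limit x" "(\<lambda>k. x (s (r k))) \<longlonglongrightarrow> q"
    using omega_limit_subseq[OF assms s(1)] by blast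
  then obtain k where "dist (x (s (r k))) q < e"
    using \<open>e > 0\<close> unfolding tendsto_iff eventually_sequentially by blast
  moreover have "infdist (x (s (r k))) (omega_limit x) \<le> dist (x (s (r k))) q"
    using \<open>q \<in> omega_limit x\<close> by (rule infdist_le)
  ultimately show False
    using s(2)[of "r k"] by linarith
qed

lemma omega_limit_vanishing:
  fixes x :: "real \<Rightarrow> 'a::metric_space" and h :: "'a \<Rightarrow> 'b::real_normed_vector"
  assumes "continuous_on UNIV h" "((\<lambda>t. h (x t)) \<longlongrightarrow> 0) at_top" "p \<in> omega_limit x"
  shows "h p = 0"
proof -
  have "norm (h p) \<le> 0 + e" if "e > 0" for e
  proof -
    obtain N where N: "\<And>t. N \<le> t \<Longrightarrow> norm (h (x t)) < e"
      using assms(2) \<open>e > 0\<close> unfolding tendsto_iff eventually_at_top_linorder by force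
    have "closed {y. norm (h y) \<le> e}"
      using assms(1) by (intro closed_Collect_le continuous_intros) auto
    moreover have "x ` {max N 0..} \<subseteq> {y. norm (h y) \<le> e}"
      using N by (force simp: less_imp_le)
    ultimately have "closure (x ` {max N 0..}) \<subseteq> {y. norm (h y) \<le> e}"
      by (rule closure_minimal[rotated])
    moreover have "p \<in> closure (x ` {max N 0..})"
      using assms(3) by (auto simp: omega_limit_def)
    ultimately show ?thesis
      by auto
  qed
  then show ?thesis
    using field_le_epsilon by (metis norm_le_zero_iff)
qed

lemma norm_sfield_le:
  assumes "0 \<le> \<zeta>"
  shows "norm (sfield f g \<zeta> y) \<le> 1 + \<zeta>"
proof -
  let ?u = "(1 / norm (grad f y)) *\<^sub>R grad f y" and ?v = "(\<zeta> / norm (grad g y)) *\<^sub>R grad g y"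
  have "norm ?u \<le> 1"
    by (cases "grad f y = 0") auto
  moreover have "norm ?v \<le> \<zeta>"
    using assms by (cases "grad g y = 0") auto
  moreover have "norm (- ?u - ?v) \<le> norm ?u + norm ?v"
    using norm_triangle_ineq4[of "- ?u" ?v] by simp
  ultimately show ?thesis
    unfolding sfield_def scaleR_minus_left by linarith
qed

lemma inner_grad_sfield_le:
  assumes "0 \<le> \<zeta>"
  shows "grad f y \<bullet> sfield f g \<zeta> y \<le> - (1 - \<zeta>) * norm (grad f y)"
proof -
  let ?a = "grad f y" and ?b = "grad g y"
  have "?a \<bullet> ((1 / norm ?a) *\<^sub>R ?a) = norm ?a"
    by (cases "?a = 0") (simp_all add: power2_norm_eq_inner[symmetric] power2_eq_square)
  moreover have "- (?a \<bullet> ((\<zeta> / norm ?b) *\<^sub>R ?b)) \<le> \<zeta> * norm ?a"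
  proof (cases "?b = 0")
    case False
    have "- (?a \<bullet> ?b) \<le> norm ?a * norm ?b"
      using Cauchy_Schwarz_ineq2[of ?a ?b] by linarith
    then have "\<zeta> / norm ?b * - (?a \<bullet> ?b) \<le> \<zeta> / norm ?b * (norm ?a * norm ?b)"
      using assms by (intro mult_left_mono) auto
    then show ?thesis
      using False by simp
  qed (use assms in simp)
  ultimately show ?thesis
    unfolding sfield_def by (simp add: algebra_simps)
qed

lemma continuous_on_sfield:
  assumes "twice_cont_diff f" "twice_cont_diff g"
  shows "continuous_on (dom_E f g) (sfield f g \<zeta>)"
  unfolding sfield_def[abs_def] dom_E_def
  using twice_cont_diff_continuous_on_grad[OF assms(1)] twice_cont_diff_continuous_on_grad[OF assms(2)]
  by (intro continuous_intros) auto

lemma sfield_lipschitz_near: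
  fixes f g :: "'a::euclidean_space \<Rightarrow> real"
  assumes "twice_cont_diff f" "twice_cont_diff g" "0 \<le> \<zeta>" "p \<in> dom_E f g"
  obtains r L where "0 < r" "cball p r \<subseteq> dom_E f g" "L-lipschitz_on (cball p r) (sfield f g \<zeta>)"
proof -
  define m where "m = min (norm (grad f p)) (norm (grad g p)) / 2"
  have "0 < norm (grad f p)" "0 < norm (grad g p)"
    using assms(4) by (auto simp: dom_E_def)
  then have "0 < m"
    by (simp add: m_def)
  define U where "U = {y. m < norm (grad f y)} \<inter> {y. m < norm (grad g y)}"
  have "m \<le> norm (grad f p) / 2" "m \<le> norm (grad g p) / 2"
    by (simp_all add: m_def divide_right_mono)
  with \<open>0 < norm (grad f p)\<close> \<open>0 < norm (grad g p)\<close> have "p \<in> U"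
    unfolding U_def by (intro IntI CollectI) linarith+
  moreover have "open U"
    unfolding U_def
    using twice_cont_diff_continuous_on_grad[OF assms(1)] twice_cont_diff_continuous_on_grad[OF assms(2)]
    by (intro open_Int open_Collect_less continuous_intros) auto
  ultimately obtain r where "0 < r" "cball p r \<subseteq> U"
    using open_contains_cball by blast
  then have m_le: "m \<le> norm (grad f y)" "m \<le> norm (grad g y)" if "y \<in> cball p r" for y
    using that by (auto simp: U_def)
  obtain Bf where "Bf-lipschitz_on (cball p r) (grad f)"
    using twice_cont_diff_lipschitz_on_grad[OF assms(1) convex_cball compact_cball] .
  from lipschitz_on_normalized[OF this \<open>0 < m\<close> m_le(1)]
  have lip_f: "(2 / m * Bf)-lipschitz_on (cball p r) (\<lambda>y. (1 / norm (grad f y)) *\<^sub>R grad f y)" .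
  obtain Bg where "Bg-lipschitz_on (cball p r) (grad g)"
    using twice_cont_diff_lipschitz_on_grad[OF assms(2) convex_cball compact_cball] .
  from lipschitz_on_normalized[OF this \<open>0 < m\<close> m_le(2)]
  have lip_g: "(2 / m * Bg)-lipschitz_on (cball p r) (\<lambda>y. (1 / norm (grad g y)) *\<^sub>R grad g y)" .
  have "sfield f g \<zeta> = (\<lambda>y. - ((1 / norm (grad f y)) *\<^sub>R grad f y)
      - \<zeta> *\<^sub>R ((1 / norm (grad g y)) *\<^sub>R grad g y))"
    by (simp add: sfield_def fun_eq_iff)
  then have "(2 / m * Bf + \<zeta> * (2 / m * Bg))-lipschitz_on (cball p r) (sfield f g \<zeta>)"
    using lipschitz_on_diff[OF lipschitz_on_minus[OF lip_f] lipschitz_on_cmult_nonneg[OF lip_g assms(3)]]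
    by simp
  moreover have "cball p r \<subseteq> dom_E f g"
    using m_le \<open>0 < m\<close> by (force simp: dom_E_def)
  ultimately show thesis
    using that \<open>0 < r\<close> by blast
qed

definition sol_interval :: "ereal \<Rightarrow> real set" where
  "sol_interval T = {t. 0 \<le> t \<and> ereal t < T}"

lemma sol_interval_infinity [simp]: "sol_interval \<infinity> = {0..}"
  by (auto simp: sol_interval_def)

lemma sol_interval_ereal [simp]: "sol_interval (ereal \<tau>) = {0..<\<tau>}"
  by (auto simp: sol_interval_def)

lemma convex_sol_interval: "convex (sol_interval T)"
  by (cases T) (simp_all add: sol_interval_def[of "-\<infinity>"])

lemma sol_interval_Icc_subset:
  "t \<in> sol_interval T \<Longrightarrow> u \<in> sol_interval T \<Longrightarrow> {t..u} \<subseteq> sol_interval T"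
  using convex_sol_interval[of T] closed_segment_eq_real_ivl[of t u]
  by (auto simp: convex_contains_segment split: if_splits)

lemma is_sol_iff:
  "is_sol f g \<zeta> x0 x T \<longleftrightarrow> 0 < T \<and> x 0 = x0 \<and>
     (\<forall>t\<in>sol_interval T. x t \<in> dom_E f g \<and>
        (x has_vector_derivative sfield f g \<zeta> (x t)) (at t within sol_interval T))"
  by (auto simp: is_sol_def sol_interval_def)

lemma is_sol_has_vector_derivative_Icc:
  fixes f g :: "'a::euclidean_space \<Rightarrow> real"
  assumes "twice_cont_diff f" "twice_cont_diff g"
    and sol: "is_sol f g \<zeta> x0 x (ereal \<tau>)" and lim: "(x \<longlongrightarrow> y \<tau>) (at_left \<tau>)"
    and "y \<tau> \<in> dom_E f g" and y: "\<And>t. t < \<tau> \<Longrightarrow> y t = x t" and "t \<in> {0..\<tau>}"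
  shows "(y has_vector_derivative sfield f g \<zeta> (y t)) (at t within {0..\<tau>})"
proof -
  let ?s = "sfield f g \<zeta>"
  have "0 < ereal \<tau>"
    and xE: "\<And>t. t \<in> {0..<\<tau>} \<Longrightarrow> x t \<in> dom_E f g"
    and x': "\<And>t. t \<in> {0..<\<tau>} \<Longrightarrow> (x has_vector_derivative ?s (x t)) (at t within {0..<\<tau>})"
    using sol unfolding is_sol_iff sol_interval_ereal by blast+
  then have "0 < \<tau>"
    by simp
  have cont_y: "continuous_on {0..\<tau>} y"
  proof (rule continuous_on_Icc_of_Ico[OF \<open>0 < \<tau>\<close>])
    have "continuous_on {0..<\<tau>} x"
      using x' continuous_on_eq_continuous_within has_vector_derivative_continuous by blast
    then show "continuous_on {0..<\<tau>} y"
      by (rule continuous_on_eq) (simp add: y)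
    have "eventually (\<lambda>t. x t = y t) (at_left \<tau>)"
      unfolding eventually_at_left_field using \<open>0 < \<tau>\<close> by (auto simp: y)
    with lim show "(y \<longlongrightarrow> y \<tau>) (at_left \<tau>)"
      by (rule Lim_transform_eventually)
  qed
  have "y u \<in> dom_E f g" if "u \<in> {0..\<tau>}" for u
    using xE[of u] y[of u] \<open>y \<tau> \<in> dom_E f g\<close> that by (cases "u = \<tau>") auto
  then have cont_s: "continuous_on {0..\<tau>} (\<lambda>t. ?s (y t))"
    using cont_y by (intro continuous_on_compose2[OF continuous_on_sfield[OF assms(1,2)]]) auto
  have y': "(y has_vector_derivative ?s (y u)) (at u within {0..<\<tau>})" if "u \<in> {0..<\<tau>}" for u
  proof -
    have "(y has_vector_derivative ?s (x u)) (at u within {0..<\<tau>})"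
      using x'[OF that] by (rule has_vector_derivative_transform_within[OF _ zero_less_one that])
        (simp add: y)
    then show ?thesis
      using that by (simp add: y)
  qed
  show ?thesis
    by (rule has_vector_derivative_Icc_of_Ico[OF \<open>0 < \<tau>\<close> cont_y cont_s y' \<open>t \<in> {0..\<tau>}\<close>])
qed

lemma is_sol_extend:
  fixes f g :: "'a::euclidean_space \<Rightarrow> real"
  assumes "twice_cont_diff f" "twice_cont_diff g" "0 \<le> \<zeta>"
    and sol: "is_sol f g \<zeta> x0 x (ereal \<tau>)"
    and lim: "(x \<longlongrightarrow> xs) (at_left \<tau>)" and "xs \<in> dom_E f g"
  obtains \<delta> y where "0 < \<delta>" "is_sol f g \<zeta> x0 y (ereal (\<tau> + \<delta>))" "\<And>t. t < \<tau> \<Longrightarrow> y t = x t"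
proof -
  let ?s = "sfield f g \<zeta>"
  have "0 < ereal \<tau>" and x0: "x 0 = x0" and xE: "\<And>t. t \<in> {0..<\<tau>} \<Longrightarrow> x t \<in> dom_E f g"
    using sol unfolding is_sol_iff sol_interval_ereal by blast+
  obtain r L where "0 < r" "cball xs r \<subseteq> dom_E f g" and lip: "L-lipschitz_on (cball xs r) ?s"
    using sfield_lipschitz_near[OF assms(1-3,6)] .
  obtain \<delta> z where "0 < \<delta>" "z \<tau> = xs"
    and z: "\<And>t. t \<in> {\<tau>..\<tau>+\<delta>} \<Longrightarrow> z t \<in> cball xs r \<and>
        (z has_vector_derivative ?s (z t)) (at t within {\<tau>..\<tau>+\<delta>})"
    using lipschitz_local_solution[OF \<open>0 < r\<close> lip norm_sfield_le[OF assms(3), of f g]] by blast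
  define y where "y t = (if t < \<tau> then x t else z t)" for t
  have "y \<tau> = xs"
    using \<open>z \<tau> = xs\<close> by (simp add: y_def)
  have left: "(y has_vector_derivative ?s (y t)) (at t within {0..\<tau>})" if "t \<in> {0..\<tau>}" for t
  proof (rule is_sol_has_vector_derivative_Icc[OF assms(1,2) sol _ _ _ that])
    show "(x \<longlongrightarrow> y \<tau>) (at_left \<tau>)" "y \<tau> \<in> dom_E f g"
      using lim assms(6) \<open>y \<tau> = xs\<close> by simp_all
    show "y u = x u" if "u < \<tau>" for u
      using that by (simp add: y_def)
  qed
  have right: "(y has_vector_derivative ?s (y t)) (at t within {\<tau>..\<tau>+\<delta>})" if "t \<in> {\<tau>..\<tau>+\<delta>}" for t
  proof -
    have "(y has_vector_derivative ?s (z t)) (at t within {\<tau>..\<tau>+\<delta>})"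
      using conjunct2[OF z[OF that]] by (rule has_vector_derivative_transform_within[OF _ zero_less_one that])
        (simp add: y_def)
    then show ?thesis
      using that by (simp add: y_def)
  qed
  have "is_sol f g \<zeta> x0 y (ereal (\<tau> + \<delta>))"
    unfolding is_sol_iff sol_interval_ereal
  proof (intro conjI ballI)
    show "0 < ereal (\<tau> + \<delta>)" "y 0 = x0"
      using \<open>0 < ereal \<tau>\<close> \<open>0 < \<delta>\<close> x0 by (auto simp: y_def)
    fix t assume t: "t \<in> {0..<\<tau> + \<delta>}"
    then show "y t \<in> dom_E f g"
      using xE[of t] z[of t] \<open>cball xs r \<subseteq> dom_E f g\<close> by (auto simp: y_def)
    have "(y has_vector_derivative ?s (y t)) (at t within {0..\<tau>+\<delta>})"
      by (rule has_vector_derivative_Icc_join[OF _ _ left right])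
        (use \<open>0 < ereal \<tau>\<close> \<open>0 < \<delta>\<close> t in auto)
    then show "(y has_vector_derivative ?s (y t)) (at t within {0..<\<tau>+\<delta>})"
      by (rule has_vector_derivative_within_subset) auto
  qed
  with \<open>0 < \<delta>\<close> show thesis
    by (rule that) (simp add: y_def)
qed

lemma is_max_sol_limit_notin_dom_E:
  fixes f g :: "'a::euclidean_space \<Rightarrow> real"
  assumes "twice_cont_diff f" "twice_cont_diff g" "0 \<le> \<zeta>"
    and max: "is_max_sol f g \<zeta> x0 x (ereal \<tau>)" and lim: "(x \<longlongrightarrow> xs) (at_left \<tau>)"
  shows "xs \<notin> dom_E f g"
proof
  assume "xs \<in> dom_E f g"
  moreover have "is_sol f g \<zeta> x0 x (ereal \<tau>)"
    using max by (simp add: is_max_sol_def)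
  ultimately obtain \<delta> y where "0 < \<delta>" "is_sol f g \<zeta> x0 y (ereal (\<tau> + \<delta>))"
    and "\<And>t. t < \<tau> \<Longrightarrow> y t = x t"
    using is_sol_extend[OF assms(1-3) _ lim] by blast
  moreover have "\<forall>t. 0 \<le> t \<and> ereal t < min (ereal \<tau>) (ereal (\<tau> + \<delta>)) \<longrightarrow> y t = x t"
    using \<open>0 < \<delta>\<close> \<open>\<And>t. t < \<tau> \<Longrightarrow> y t = x t\<close> by simp
  ultimately have "ereal (\<tau> + \<delta>) \<le> ereal \<tau>"
    using max unfolding is_max_sol_def by blast
  with \<open>0 < \<delta>\<close> show False
    by simp
qed

locale descent_trajectory =
  fixes f g :: "'a::euclidean_space \<Rightarrow> real" and \<zeta> :: real and x0 :: 'a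
    and x :: "real \<Rightarrow> 'a" and T :: ereal
  assumes f: "twice_cont_diff f"
    and coercive: "filterlim f at_top at_infinity"
    and zeta: "0 \<le> \<zeta>" "\<zeta> < 1"
    and sol: "is_sol f g \<zeta> x0 x T"
begin

lemma x_has_derivative:
  "t \<in> sol_interval T \<Longrightarrow>
    (x has_vector_derivative sfield f g \<zeta> (x t)) (at t within sol_interval T)"
  using sol by (simp add: is_sol_iff)

lemma zero_in_sol_interval: "0 \<in> sol_interval T"
  using sol by (simp add: is_sol_def sol_interval_def zero_ereal_def)

lemma lipschitz_on_x: "(1 + \<zeta>)-lipschitz_on (sol_interval T) x"
proof (rule bounded_derivative_imp_lipschitz[OF _ convex_sol_interval])
  fix t assume "t \<in> sol_interval T"
  show "(x has_derivative (\<lambda>h. h *\<^sub>R sfield f g \<zeta> (x t))) (at t within sol_interval T)"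
    using x_has_derivative[OF \<open>t \<in> sol_interval T\<close>] by (simp add: has_vector_derivative_def)
  have "onorm (\<lambda>h::real. h *\<^sub>R sfield f g \<zeta> (x t)) = norm (sfield f g \<zeta> (x t))"
    using onorm_scaleR_left[OF bounded_linear_ident] onorm_id[where 'a=real] by (simp add: id_def)
  then show "onorm (\<lambda>h::real. h *\<^sub>R sfield f g \<zeta> (x t)) \<le> 1 + \<zeta>"
    using norm_sfield_le[OF zeta(1)] by simp
qed (use zeta in simp)

lemma continuous_on_x: "continuous_on (sol_interval T) x"
  using lipschitz_on_x by (rule lipschitz_on_continuous_on)

lemma f_x_decrease:
  assumes "t \<in> sol_interval T" "u \<in> sol_interval T" "t \<le> u"
    and grad_ge: "\<And>r. r \<in> {t..u} \<Longrightarrow> e \<le> norm (grad f (x r))"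
  shows "f (x u) \<le> f (x t) - (1 - \<zeta>) * e * (u - t)"
proof -
  have tu: "{t..u} \<subseteq> sol_interval T"
    using assms(1,2) by (rule sol_interval_Icc_subset)
  have "\<exists>r\<in>{t..u}. f (x u) - f (x t) = (u - t) * (grad f (x r) \<bullet> sfield f g \<zeta> (x r))"
  proof (rule mvt_very_simple[OF assms(3), of "\<lambda>r. f (x r)"
        "\<lambda>r h. h * (grad f (x r) \<bullet> sfield f g \<zeta> (x r))"])
    fix r assume "t \<le> r" "r \<le> u"
    then have "r \<in> {t..u}"
      by simp
    have "(f has_derivative (\<lambda>h. grad f (x r) \<bullet> h)) (at (x r) within x ` {t..u})"
      using twice_cont_diff_has_derivative_grad[OF f] by (rule has_derivative_at_withinI)
    moreover have "(x has_vector_derivative sfield f g \<zeta> (x r)) (at r within {t..u})"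
      using x_has_derivative[of r] \<open>r \<in> {t..u}\<close> tu
      by (metis has_vector_derivative_within_subset subsetD)
    ultimately show "((\<lambda>r. f (x r)) has_derivative (\<lambda>h. h * (grad f (x r) \<bullet> sfield f g \<zeta> (x r))))
        (at r within {t..u})"
      using vector_derivative_diff_chain_within
      by (fastforce simp: has_vector_derivative_def o_def mult.commute)
  qed
  then obtain r where r: "r \<in> {t..u}"
    and eq: "f (x u) - f (x t) = (u - t) * (grad f (x r) \<bullet> sfield f g \<zeta> (x r))"
    by blast
  have "grad f (x r) \<bullet> sfield f g \<zeta> (x r) \<le> - (1 - \<zeta>) * e"
    using inner_grad_sfield_le[OF zeta(1), of f "x r" g] mult_left_mono[OF grad_ge[OF r], of "1 - \<zeta>"] zeta(2)
    by linarith
  then have "(u - t) * (grad f (x r) \<bullet> sfield f g \<zeta> (x r)) \<le> (u - t) * (- (1 - \<zeta>) * e)"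
    using assms(3) by (intro mult_left_mono) auto
  then show ?thesis
    using eq by (simp add: algebra_simps)
qed

lemma f_x_le: "t \<in> sol_interval T \<Longrightarrow> f (x t) \<le> f x0"
  using f_x_decrease[OF zero_in_sol_interval, of t 0] sol
  by (simp add: is_sol_def sol_interval_def)

lemma compact_sublevel: "compact {y. f y \<le> f x0}"
  using compact_sublevel_set[OF twice_cont_diff_continuous_on[OF f] coercive] .

lemma grad_f_x_stays_large:
  assumes "0 < e"
  obtains h where "0 < h"
    "\<And>t r. t \<in> sol_interval T \<Longrightarrow> r \<in> sol_interval T \<Longrightarrow> \<bar>r - t\<bar> \<le> h \<Longrightarrow>
       e \<le> norm (grad f (x t)) \<Longrightarrow> e / 2 \<le> norm (grad f (x r))"
proof -
  let ?K = "{y. f y \<le> f x0}"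
  have "uniformly_continuous_on ?K (grad f)"
    by (rule compact_uniformly_continuous[OF twice_cont_diff_continuous_on_grad[OF f] compact_sublevel])
  then obtain d where "0 < d"
    and d: "\<And>y w. y \<in> ?K \<Longrightarrow> w \<in> ?K \<Longrightarrow> dist w y < d \<Longrightarrow> dist (grad f w) (grad f y) < e / 2"
    using \<open>0 < e\<close> unfolding uniformly_continuous_on_def by (metis half_gt_zero)
  have "(1 + \<zeta>) * (d / 2) < 2 * (d / 2)"
    using zeta(2) \<open>0 < d\<close> by (intro mult_strict_right_mono) auto
  have "e / 2 \<le> norm (grad f (x r))"
    if t: "t \<in> sol_interval T" and r: "r \<in> sol_interval T" "\<bar>r - t\<bar> \<le> d / 2"
      and e_le: "e \<le> norm (grad f (x t))" for t r
  proof -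
    have "dist (x r) (x t) \<le> (1 + \<zeta>) * \<bar>r - t\<bar>"
      using lipschitz_onD[OF lipschitz_on_x r(1) t] by (simp add: dist_real_def)
    also have "\<dots> \<le> (1 + \<zeta>) * (d / 2)"
      using r(2) zeta(1) by (intro mult_left_mono) auto
    finally have "dist (grad f (x r)) (grad f (x t)) < e / 2"
      using d f_x_le r(1) t \<open>(1 + \<zeta>) * (d / 2) < 2 * (d / 2)\<close> by simp
    then show ?thesis
      using e_le norm_triangle_ineq3[of "grad f (x t)" "grad f (x r)"]
      by (simp add: dist_norm norm_minus_commute)
  qed
  with \<open>0 < d\<close> show thesis
    using that[of "d / 2"] by simp
qed

lemma descent_step:
  assumes "0 < e"
  obtains h c where "0 < h" "0 < c"
    "\<And>t. t \<in> sol_interval T \<Longrightarrow> t + h \<in> sol_interval T \<Longrightarrow> e \<le> norm (grad f (x t)) \<Longrightarrow>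
       f (x (t + h)) \<le> f (x t) - c"
proof -
  obtain h where "0 < h" and stays_large: "\<And>t r. t \<in> sol_interval T \<Longrightarrow> r \<in> sol_interval T \<Longrightarrow>
      \<bar>r - t\<bar> \<le> h \<Longrightarrow> e \<le> norm (grad f (x t)) \<Longrightarrow> e / 2 \<le> norm (grad f (x r))"
    using grad_f_x_stays_large[OF assms] by blast
  have "f (x (t + h)) \<le> f (x t) - (1 - \<zeta>) * (e / 2) * h"
    if t: "t \<in> sol_interval T" "t + h \<in> sol_interval T" and "e \<le> norm (grad f (x t))" for t
  proof -
    have "e / 2 \<le> norm (grad f (x r))" if "r \<in> {t..t + h}" for r
      using stays_large[OF t(1) _ _ \<open>e \<le> norm (grad f (x t))\<close>] sol_interval_Icc_subset[OF t] that
      by auto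
    then have "f (x (t + h)) \<le> f (x t) - (1 - \<zeta>) * (e / 2) * (t + h - t)"
      using \<open>0 < h\<close> by (intro f_x_decrease[OF t]) auto
    then show ?thesis
      by simp
  qed
  moreover have "0 < (1 - \<zeta>) * (e / 2) * h"
    using zeta(2) \<open>0 < e\<close> \<open>0 < h\<close> by simp
  ultimately show thesis
    using that[OF \<open>0 < h\<close>] by blast
qed

lemma grad_f_x_tendsto_zero:
  assumes "T = \<infinity>"
  shows "((\<lambda>t. grad f (x t)) \<longlongrightarrow> 0) at_top"
proof (rule ccontr)
  assume "\<not> ?thesis"
  then obtain e where "0 < e" and freq: "\<And>N. \<exists>t\<ge>N. e \<le> norm (grad f (x t))"
    unfolding tendsto_iff eventually_at_top_linorder dist_norm by (force simp: not_less)
  obtain h c where "0 < h" "0 < c" and step: "\<And>t. t \<in> sol_interval T \<Longrightarrow> t + h \<in> sol_interval T \<Longrightarrow>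
      e \<le> norm (grad f (x t)) \<Longrightarrow> f (x (t + h)) \<le> f (x t) - c"
    using descent_step[OF \<open>0 < e\<close>] by blast
  \<comment> \<open>\<open>f \<circ> x\<close> is bounded below on the compact sublevel set, so it cannot drop by \<open>c\<close>
    after getting within \<open>c\<close> of its infimum.\<close>
  define V where "V = (\<lambda>t. f (x t)) ` {0..}"
  have "bdd_below V"
  proof -
    obtain y where "\<forall>w\<in>{y. f y \<le> f x0}. f y \<le> f w"
      using continuous_attains_inf[OF compact_sublevel _ twice_cont_diff_continuous_on[OF f]] by blast
    then show ?thesis
      using f_x_le assms unfolding V_def bdd_below_def by auto
  qed
  obtain t1 where "t1 \<ge> 0" "f (x t1) < Inf V + c"
    using cInf_lessD[of V "Inf V + c"] \<open>0 < c\<close> by (auto simp: V_def)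
  obtain t where "t \<ge> t1" "e \<le> norm (grad f (x t))"
    using freq by blast
  have "f (x t) \<le> f (x t1)"
    using f_x_decrease[of t1 t 0] \<open>t \<ge> t1\<close> \<open>t1 \<ge> 0\<close> assms by simp
  moreover have "f (x (t + h)) \<le> f (x t) - c"
    using step \<open>t \<ge> t1\<close> \<open>t1 \<ge> 0\<close> \<open>0 < h\<close> \<open>e \<le> norm (grad f (x t))\<close> assms by simp
  moreover have "Inf V \<le> f (x (t + h))"
    using \<open>bdd_below V\<close> \<open>t \<ge> t1\<close> \<open>t1 \<ge> 0\<close> \<open>0 < h\<close> by (intro cInf_lower) (auto simp: V_def)
  ultimately show False
    using \<open>f (x t1) < Inf V + c\<close> by linarith
qed

lemma x_tendsto_at_finite_time:
  assumes "T = ereal \<tau>"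
  obtains xs where "(x \<longlongrightarrow> xs) (at_left \<tau>)"
proof -
  have "0 < \<tau>"
    using zero_in_sol_interval assms by simp
  have "uniformly_continuous_on {0..<\<tau>} x"
    using lipschitz_on_uniformly_continuous[OF lipschitz_on_x] assms by simp
  moreover have "\<tau> \<in> closure {0..<\<tau>}"
    using \<open>0 < \<tau>\<close> by simp
  ultimately obtain xs where "(x \<longlongrightarrow> xs) (at \<tau> within {0..<\<tau>})"
    using uniformly_continuous_on_extension_at_closure by blast
  moreover have "at \<tau> within {0..<\<tau>} = at_left \<tau>"
    by (rule at_within_nhd[of _ "{0<..}"]) (use \<open>0 < \<tau>\<close> in auto)
  ultimately show thesis
    using that by simp
qed

end

locale maximal_descent_trajectory = descent_trajectory +
  assumes g: "twice_cont_diff g"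
    and grad_g_nonzero: "\<And>y. grad g y \<noteq> 0"
    and maximal: "is_max_sol f g \<zeta> x0 x T"
begin

lemma limit_at_finite_time_critical:
  assumes "T = ereal \<tau>"
  obtains xs where "grad f xs = 0" "(x \<longlongrightarrow> xs) (at_left \<tau>)"
proof -
  obtain xs where lim: "(x \<longlongrightarrow> xs) (at_left \<tau>)"
    using x_tendsto_at_finite_time[OF assms] .
  have "xs \<notin> dom_E f g"
    using is_max_sol_limit_notin_dom_E[OF f g zeta(1) maximal[unfolded assms] lim] .
  then have "grad f xs = 0"
    using grad_g_nonzero by (simp add: dom_E_def)
  with lim show thesis
    using that by blast
qed

lemma critical_continuum_attracts:
  obtains C where "C \<noteq> {}" "connected C" "C \<subseteq> {p. grad f p = 0}"
    "((\<lambda>t. infdist (x t) C) \<longlongrightarrow> 0) (to_T T)"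
proof (cases T)
  case PInf
  then have K: "compact {y. f y \<le> f x0}" "x ` {0..} \<subseteq> {y. f y \<le> f x0}"
    using compact_sublevel f_x_le by auto
  show thesis
  proof (rule that)
    show "omega_limit x \<noteq> {}"
      using K by (rule omega_limit_nonempty)
    show "connected (omega_limit x)"
      using connected_omega_limit[OF _ K] continuous_on_x PInf by simp
    show "omega_limit x \<subseteq> {p. grad f p = 0}"
      using omega_limit_vanishing[OF twice_cont_diff_continuous_on_grad[OF f]
          grad_f_x_tendsto_zero[OF PInf]] by blast
    show "((\<lambda>t. infdist (x t) (omega_limit x)) \<longlongrightarrow> 0) (to_T T)"
      using omega_limit_attracts[OF K] PInf by (simp add: to_T_def)
  qed
next
  case (real \<tau>)
  then obtain xs where "grad f xs = 0" "(x \<longlongrightarrow> xs) (at_left \<tau>)"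
    using limit_at_finite_time_critical by blast
  then show thesis
    using that[of "{xs}"] real by (simp add: to_T_def tendsto_dist_iff[symmetric])
next
  case MInf
  then show thesis
    using zero_in_sol_interval by (simp add: sol_interval_def)
qed

end

lemma tendsto_isolated_of_infdist_connected:
  fixes x :: "'b \<Rightarrow> 'a::metric_space"
  assumes "connected C" "C \<noteq> {}" "C \<subseteq> P"
    and "\<And>p. p \<in> P \<Longrightarrow> \<exists>e>0. \<forall>q\<in>P. dist q p < e \<longrightarrow> q = p"
    and "((\<lambda>t. infdist (x t) C) \<longlongrightarrow> 0) F"
  obtains p where "p \<in> P" "(x \<longlongrightarrow> p) F"
proof -
  obtain p where "C = {p}"
    using connected_subset_isolated_sing[OF assms(1-4)] .
  with assms(3,5) show thesis
    using that by (simp add: tendsto_dist_iff[symmetric])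
qed

theorem theorem5p7:
  fixes f g :: "'a::euclidean_space \<Rightarrow> real"
    and \<zeta> :: real and x0 :: 'a and x :: "real \<Rightarrow> 'a" and T :: ereal
  assumes "twice_cont_diff f" and "twice_cont_diff g"
    and "filterlim f at_top at_infinity"
    and "\<forall>x. grad g x \<noteq> 0"
    and "0 \<le> \<zeta>" and "\<zeta> < 1"
    and "g x0 \<le> 0"
    and "is_max_sol f g \<zeta> x0 x T"
  shows "(\<exists>C. C \<noteq> {} \<and> connected C \<and> C \<subseteq> {p. grad f p = 0} \<and>
             ((\<lambda>t. infdist (x t) C) \<longlongrightarrow> 0) (to_T T))
       \<and> ((\<forall>p. grad f p = 0 \<longrightarrow> (\<exists>e>0. \<forall>q. grad f q = 0 \<and> dist q p < e \<longrightarrow> q = p))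
            \<longrightarrow> (\<exists>xc. grad f xc = 0 \<and> (x \<longlongrightarrow> xc) (to_T T)))"
proof -
  interpret maximal_descent_trajectory f g \<zeta> x0 x T
    using assms by unfold_locales (auto simp: is_max_sol_def)
  obtain C where C: "C \<noteq> {}" "connected C" "C \<subseteq> {p. grad f p = 0}"
    and lim: "((\<lambda>t. infdist (x t) C) \<longlongrightarrow> 0) (to_T T)"
    by (rule critical_continuum_attracts)
  have "\<exists>xc. grad f xc = 0 \<and> (x \<longlongrightarrow> xc) (to_T T)"
    if isolated: "\<forall>p. grad f p = 0 \<longrightarrow> (\<exists>e>0. \<forall>q. grad f q = 0 \<and> dist q p < e \<longrightarrow> q = p)"
  proof -
    have "\<exists>e>0. \<forall>q\<in>{p. grad f p = 0}. dist q p < e \<longrightarrow> q = p" if "p \<in> {p. grad f p = 0}" for p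
      using isolated that by (simp add: imp_conjL)
    from tendsto_isolated_of_infdist_connected[OF C(2,1,3) this lim] show ?thesis
      by blast
  qed
  with C lim show ?thesis
    by blast
qed

end
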